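(* Let $S=\{v_1,\ldots,v_n\}\subset\mathbb Z^n$ be an orthogonal subset with Wu element $W=\sum_{i=1}^n v_i=\sum_{i=1}^n k_ie_i$, and let $R_o=\{i: k_i\equiv1\pmod2\}$. If $I(S)>n-3|R_o|$, then the lattice generated by $S$ is not cubiquitous.
   Context: $\mathbb Z^n$ carries the standard dot product with standard basis $e_1,\ldots,e_n$. $a_i=\langle v_i,v_i\rangle$ and $I(S)=\sum_{i=1}^n(a_i-3)$. $S$ is orthogonal if $a_i\ge1$ for all $i$ and $\langle v_i,v_j\rangle=0$ for all $i\ne j$. A full-rank sublattice $\Lambda\subset\mathbb Z^n$ is cubiquitous if $\Lambda\cap(x+\{0,1\}^n)\ne\emptyset$ for every $x\in\mathbb Z^n$. *)

theory Defs
  imports "HOL-Analysis.Analysis"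
begin

text \<open>Z^n is rendered as int ^ 'n, with the finite type 'n indexing both the
  coordinates and the elements v_1..v_n of S.\<close>

definition zdot :: "int ^ 'n::finite \<Rightarrow> int ^ 'n \<Rightarrow> int" where
  "zdot x y = (\<Sum>j\<in>UNIV. x $ j * y $ j)"

definition orthogonal_family :: "('n::finite \<Rightarrow> int ^ 'n) \<Rightarrow> bool" where
  "orthogonal_family v \<longleftrightarrow>
     (\<forall>i. zdot (v i) (v i) \<ge> 1) \<and> (\<forall>i j. i \<noteq> j \<longrightarrow> zdot (v i) (v j) = 0)"

definition I_S :: "('n::finite \<Rightarrow> int ^ 'n) \<Rightarrow> int" where
  "I_S v = (\<Sum>i\<in>UNIV. zdot (v i) (v i) - 3)"

definition wu_element :: "('n::finite \<Rightarrow> int ^ 'n) \<Rightarrow> int ^ 'n" where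
  "wu_element v = (\<Sum>i\<in>UNIV. v i)"

definition lattice_gen :: "('n::finite \<Rightarrow> int ^ 'n) \<Rightarrow> (int ^ 'n) set" where
  "lattice_gen v = {x. \<exists>c :: 'n \<Rightarrow> int. x = (\<Sum>i\<in>UNIV. c i *s v i)}"

definition cubiquitous :: "(int ^ 'n::finite) set \<Rightarrow> bool" where
  "cubiquitous L \<longleftrightarrow>
     (\<forall>x :: int ^ 'n. \<exists>y\<in>L. \<forall>j. y $ j - x $ j \<in> {0, 1})"

end

theory Submission
  imports Defs
begin

text \<open>If the lattice were cubiquitous, it would contain a vector \<open>y\<close> in the unit cube at
  \<open>\<lfloor>W/2\<rfloor>\<close>. Then \<open>W - 2y\<close> is a combination of the \<open>v\<^sub>i\<close> with odd coefficients, so by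
  orthogonality its squared norm is at least \<open>\<Sum> a\<^sub>i = I(S) + 3n\<close>. On the other hand each
  coordinate of \<open>W - 2y\<close> has absolute value at most 1 where \<open>k\<^sub>j\<close> is odd and at most 2
  where it is even, so the squared norm is at most \<open>4n - 3|R\<^sub>o|\<close>.\<close>

lemma zdot_commute: "zdot x y = zdot y x"
  unfolding zdot_def by (simp add: mult.commute)

lemma zdot_self_eq_sum_squares: "zdot x x = (\<Sum>j\<in>UNIV. (x $ j)\<^sup>2)"
  unfolding zdot_def by (simp add: power2_eq_square)

lemma zdot_self_nonneg: "zdot x x \<ge> 0"
  unfolding zdot_self_eq_sum_squares by (simp add: sum_nonneg)

lemma zdot_scale_left: "zdot (c *s x) y = c * zdot x y"
  unfolding zdot_def by (simp add: sum_distrib_left mult.assoc)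

lemma zdot_scale_right: "zdot x (c *s y) = c * zdot x y"
  by (simp add: zdot_commute[of x] zdot_scale_left)

lemma zdot_sum_left: "zdot (\<Sum>a\<in>A. f a) y = (\<Sum>a\<in>A. zdot (f a) y)"
  unfolding zdot_def by (simp add: sum_distrib_right) (rule sum.swap)

lemma zdot_sum_right: "zdot x (\<Sum>a\<in>A. f a) = (\<Sum>a\<in>A. zdot x (f a))"
  by (simp add: zdot_commute[of x] zdot_sum_left)

lemma zdot_self_orthogonal_combination:
  fixes v :: "'a \<Rightarrow> int ^ 'n::finite"
  assumes "finite A" and orth: "\<And>a b. a \<in> A \<Longrightarrow> b \<in> A \<Longrightarrow> a \<noteq> b \<Longrightarrow> zdot (v a) (v b) = 0"
  shows "zdot (\<Sum>a\<in>A. u a *s v a) (\<Sum>a\<in>A. u a *s v a) = (\<Sum>a\<in>A. (u a)\<^sup>2 * zdot (v a) (v a))"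
proof -
  have "zdot (\<Sum>a\<in>A. u a *s v a) (\<Sum>b\<in>A. u b *s v b)
      = (\<Sum>b\<in>A. \<Sum>a\<in>A. u a * u b * zdot (v a) (v b))"
    by (simp add: zdot_sum_left zdot_sum_right zdot_scale_left zdot_scale_right
        sum_distrib_left mult_ac)
  also have "\<dots> = (\<Sum>b\<in>A. \<Sum>a\<in>A. if a = b then u b * u b * zdot (v b) (v b) else 0)"
    by (intro sum.cong refl) (auto simp: orth)
  also have "\<dots> = (\<Sum>a\<in>A. (u a)\<^sup>2 * zdot (v a) (v a))"
    using \<open>finite A\<close> by (simp add: power2_eq_square)
  finally show ?thesis .
qed

lemma zdot_self_odd_combination_ge:
  fixes v :: "'a \<Rightarrow> int ^ 'n::finite"
  assumes "finite A" and orth: "\<And>a b. a \<in> A \<Longrightarrow> b \<in> A \<Longrightarrow> a \<noteq> b \<Longrightarrow> zdot (v a) (v b) = 0"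
    and odd: "\<And>a. a \<in> A \<Longrightarrow> odd (u a)"
  shows "(\<Sum>a\<in>A. zdot (v a) (v a)) \<le> zdot (\<Sum>a\<in>A. u a *s v a) (\<Sum>a\<in>A. u a *s v a)"
proof -
  have "zdot (v a) (v a) \<le> (u a)\<^sup>2 * zdot (v a) (v a)" if "a \<in> A" for a
  proof -
    have "u a \<noteq> 0" using odd[OF that] by auto
    then have "0 < (u a)\<^sup>2" by simp
    then have "1 \<le> (u a)\<^sup>2" by linarith
    from mult_right_mono[OF this zdot_self_nonneg] show ?thesis by simp
  qed
  then show ?thesis
    by (simp add: zdot_self_orthogonal_combination[OF assms(1,2)] sum_mono)
qed

lemma square_sub_double_near_half_le:
  fixes w t :: int
  assumes "t - w div 2 \<in> {0, 1}"
  shows "(w - 2 * t)\<^sup>2 \<le> (if odd w then 1 else 4)"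
proof -
  define d where "d = t - w div 2"
  have "w - 2 * t = w mod 2 - 2 * d"
    using minus_mod_eq_mult_div[of w 2] unfolding d_def right_diff_distrib by linarith
  then show ?thesis
    using assms unfolding d_def[symmetric]
    by (cases "odd w") (auto simp: odd_iff_mod_2_eq_one even_iff_mod_2_eq_zero)
qed

lemma sum_odd_one_even_four:
  assumes "finite A"
  shows "(\<Sum>a\<in>A. if odd (f a) then 1 else 4 :: int)
       = 4 * int (card A) - 3 * int (card {a\<in>A. odd (f a)})"
proof -
  have "(\<Sum>a\<in>A. if odd (f a) then 1 else 4 :: int) = (\<Sum>a\<in>A. 4 - 3 * of_bool (odd (f a)))"
    by (intro sum.cong) auto
  also have "\<dots> = 4 * int (card A) - 3 * (\<Sum>a\<in>A. of_bool (odd (f a)))"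
    by (simp add: sum_subtractf sum_distrib_left)
  finally show ?thesis
    using assms by (simp add: sum.If_cases Collect_conj_eq Int_commute)
qed

theorem corollary2p6:
  fixes v :: "'n::finite \<Rightarrow> int ^ 'n"
  assumes "orthogonal_family v"
    and "I_S v > int CARD('n) - 3 * int (card {i. odd (wu_element v $ i)})"
  shows "\<not> cubiquitous (lattice_gen v)"
proof
  assume "cubiquitous (lattice_gen v)"
  define W where "W = wu_element v"
  obtain y where "y \<in> lattice_gen v" and "\<forall>j. y $ j - (\<chi> j. W $ j div 2) $ j \<in> {0, 1}"
    using \<open>cubiquitous (lattice_gen v)\<close> unfolding cubiquitous_def by blast
  then have y_near: "y $ j - W $ j div 2 \<in> {0, 1}" for j
    by simp
  obtain c where y: "y = (\<Sum>i\<in>UNIV. c i *s v i)"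
    using \<open>y \<in> lattice_gen v\<close> unfolding lattice_gen_def by blast
  have W_minus_2y: "W - 2 *s y = (\<Sum>i\<in>UNIV. (1 - 2 * c i) *s v i)"
    unfolding W_def wu_element_def y
    by (simp add: vec_eq_iff sum_subtractf sum_distrib_left algebra_simps)
  have "(\<Sum>i\<in>UNIV. zdot (v i) (v i)) \<le> zdot (W - 2 *s y) (W - 2 *s y)"
    unfolding W_minus_2y using \<open>orthogonal_family v\<close>
    by (intro zdot_self_odd_combination_ge) (auto simp: orthogonal_family_def)
  also have "\<dots> \<le> (\<Sum>j\<in>UNIV. if odd (W $ j) then 1 else 4)"
    unfolding zdot_self_eq_sum_squares vector_minus_component vector_smult_component
    by (intro sum_mono square_sub_double_near_half_le y_near)
  also have "\<dots> = 4 * int CARD('n) - 3 * int (card {j. odd (W $ j)})"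
    by (simp add: sum_odd_one_even_four)
  finally show False
    using assms(2) unfolding I_S_def W_def by (simp add: sum_subtractf)
qed

end
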